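(* Let $\mathcal{L}=(n,\mathcal{M},\mathcal{C})$ be a simple linearization and let $\mathcal{T}\subseteq\mathcal{P}$. If $D(\mathcal{L})$ has a subgraph $Z$ whose underlying undirected graph is a cycle, whose node set is contained in $\mathrm{succ}(\mathcal{T})$, and which satisfies $|U(Z)|=1$, then $\mathrm{proj}_{\mathcal{S}\cup\mathcal{T}}(P(\mathcal{L}))$ is not integral.
   Context: $[n]=\{1,\dots,n\}$; a monomial is a nonempty subset of $[n]$; $\mathcal{S}=\{\{i\}:i\in[n]\}$. A linearization is a triple $\mathcal{L}=(n,\mathcal{M},\mathcal{C})$, where $\mathcal{M}$ is a set of monomials with $\mathcal{S}\subseteq\mathcal{M}$ and $\mathcal{C}$ is a set of AND-constraints; each AND-constraint is a set $c\subseteq\mathcal{M}$ whose union $\bigcup c$ (resultant) lies in $\mathcal{M}$. $\mathcal{P}=\mathcal{M}\setminus\mathcal{S}$. Linearizations are consistent: each $m\in\mathcal{P}$ is the resultant of some $c$ with $|m'|<|m|$ for all $m'\in c$. $\mathcal{L}$ is simple if each proper monomial is the resultant of exactly one AND-constraint and $|\mathcal{C}|=|\mathcal{P}|$. $P(\mathcal{L})\subseteq\mathbb{R}^{\mathcal{M}}$ is the set of $y$ with $0\le y_m\le1$ ($m\in\mathcal{M}$), $y_{\bigcup c}\le y_m$ ($c\in\mathcal{C}$, $m\in c$), $\sum_{m\in c}y_m\le y_{\bigcup c}+|c|-1$ ($c\in\mathcal{C}$). $D(\mathcal{L})$ has node set $\mathcal{M}$ and, for each $c\in\mathcal{C}$,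 arcs from $\bigcup c$ to each $m\in c$. Cycles are simple. $\mathrm{succ}(W)$ is the set of nodes reachable by directed paths from $W$, including $W$. $U(Z)$ is the set of nodes of out-degree at least $2$ in $Z$. $\mathrm{proj}_{\mathcal{M}'}$ is orthogonal projection onto coordinates in $\mathcal{M}'$. *)

theory Defs
  imports Complex_Main
begin

type_synonym monomial = "nat set"
type_synonym andc = "monomial set"

definition singletons :: "nat \<Rightarrow> monomial set" where
  "singletons n = {{i} | i. i \<in> {1..n}}"

definition proper_monos :: "nat \<Rightarrow> monomial set \<Rightarrow> monomial set" where
  "proper_monos n M = M - singletons n"

definition linearization :: "nat \<Rightarrow> monomial set \<Rightarrow> andc set \<Rightarrow> bool" where
  "linearization n M C \<longleftrightarrow>
     (\<forall>m\<in>M. m \<noteq> {} \<and> m \<subseteq> {1..n}) \<and>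
     singletons n \<subseteq> M \<and>
     (\<forall>c\<in>C. c \<subseteq> M \<and> \<Union>c \<in> M) \<and>
     (\<forall>m\<in>proper_monos n M. \<exists>c\<in>C. \<Union>c = m \<and> (\<forall>m'\<in>c. card m' < card m))"

definition simple_lin :: "nat \<Rightarrow> monomial set \<Rightarrow> andc set \<Rightarrow> bool" where
  "simple_lin n M C \<longleftrightarrow> linearization n M C \<and>
     (\<forall>m\<in>proper_monos n M. \<exists>!c. c \<in> C \<and> \<Union>c = m) \<and>
     card C = card (proper_monos n M)"

text \<open>Points of R^M are represented as functions that vanish outside M.\<close>
definition polytope_L :: "nat \<Rightarrow> monomial set \<Rightarrow> andc set \<Rightarrow> (monomial \<Rightarrow> real) set" where
  "polytope_L n M C = {y. (\<forall>m. m \<notin> M \<longrightarrow> y m = 0) \<and>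
     (\<forall>m\<in>M. 0 \<le> y m \<and> y m \<le> 1) \<and>
     (\<forall>c\<in>C. \<forall>m\<in>c. y (\<Union>c) \<le> y m) \<and>
     (\<forall>c\<in>C. (\<Sum>m\<in>c. y m) \<le> y (\<Union>c) + real (card c) - 1)}"

definition arcs_D :: "andc set \<Rightarrow> (monomial \<times> monomial) set" where
  "arcs_D C = {(\<Union>c, m) | c m. c \<in> C \<and> m \<in> c}"

definition succ_D :: "andc set \<Rightarrow> monomial set \<Rightarrow> monomial set" where
  "succ_D C W = {v. \<exists>w\<in>W. (w, v) \<in> (arcs_D C)\<^sup>*}"

text \<open>Z (given by its arc set) is a subgraph of D(L) whose underlying undirected graph
  is a (simple) cycle through the distinct nodes vs (in cyclic order).\<close>
definition undirected_cycle_subgraph ::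
  "andc set \<Rightarrow> (monomial \<times> monomial) set \<Rightarrow> monomial list \<Rightarrow> bool" where
  "undirected_cycle_subgraph C Z vs \<longleftrightarrow>
     Z \<subseteq> arcs_D C \<and> distinct vs \<and> length vs \<ge> 3 \<and>
     {{a, b} | a b. (a, b) \<in> Z} =
       {{vs ! i, vs ! ((i + 1) mod length vs)} | i. i < length vs} \<and>
     (\<forall>i < length vs. \<not> ((vs ! i, vs ! ((i + 1) mod length vs)) \<in> Z \<and>
                           (vs ! ((i + 1) mod length vs), vs ! i) \<in> Z))"

definition nodes_of :: "(monomial \<times> monomial) set \<Rightarrow> monomial set" where
  "nodes_of Z = fst ` Z \<union> snd ` Z"

definition U_nodes :: "(monomial \<times> monomial) set \<Rightarrow> monomial set" where
  "U_nodes Z = {v \<in> nodes_of Z. card {w. (v, w) \<in> Z} \<ge> 2}"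

definition proj_on :: "monomial set \<Rightarrow> (monomial \<Rightarrow> real) \<Rightarrow> (monomial \<Rightarrow> real)" where
  "proj_on M' y = (\<lambda>m. if m \<in> M' then y m else 0)"

definition vertex_of :: "(monomial \<Rightarrow> real) \<Rightarrow> (monomial \<Rightarrow> real) set \<Rightarrow> bool" where
  "vertex_of v K \<longleftrightarrow> v \<in> K \<and>
     \<not> (\<exists>a\<in>K. \<exists>b\<in>K. \<exists>t::real. 0 < t \<and> t < 1 \<and> a \<noteq> b \<and>
          v = (\<lambda>m. (1 - t) * a m + t * b m))"

definition integral_polytope :: "(monomial \<Rightarrow> real) set \<Rightarrow> bool" where
  "integral_polytope K \<longleftrightarrow> (\<forall>v. vertex_of v K \<longrightarrow> (\<forall>m. v m \<in> \<int>))"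

end

theory Submission
  imports Defs
begin

text \<open>
  In a simple linearization every proper monomial m is the resultant of exactly one
  constraint, so unfolding these constraints down to the singletons counts the directed
  paths p_j(m) from m to {j} in D(L). For e \<ge> 0 the point y_m = 1 - min(1, e p_j(m))
  lies in P(L); conversely, every y in P(L) with y_{i} = 1 for all i \<noteq> j satisfies
  y_m \<ge> 1 - min(1, (1 - y_{j}) p_j(m)). If Z has a single node u of out-degree 2, the
  two out-neighbours of u have a common descendant, so p_j(u) \<ge> 2 for some j, and
  hence N = p_j(t) \<ge> 2 for some t in T above u. For e = 1/N the projection of y onto
  the coordinates S \<union> T is a vertex: its coordinates 1 at {i} (i \<noteq> j) and 0 at t
  force y_{j} = 1 - 1/N in any decomposition, and the lower bound then fixes all other
  coordinates. As 1 - 1/N is fractional, the projection is not integral.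
\<close>

section \<open>Linearizations\<close>

lemma linearization_finite:
  assumes "linearization n M C"
  shows "finite M" and "finite C"
proof -
  have "M \<subseteq> Pow {1..n}" and "C \<subseteq> Pow M"
    using assms unfolding linearization_def by auto
  then show "finite M" and "finite C"
    by (auto intro: finite_subset)
qed

lemma linearization_constraint_finite:
  assumes "linearization n M C" "c \<in> C"
  shows "finite c"
  using assms linearization_finite(1)[OF assms(1)]
  unfolding linearization_def by (meson finite_subset)

lemma linearization_monomial:
  assumes "linearization n M C" "m \<in> M"
  shows "m \<noteq> {}" "m \<subseteq> {1..n}"
  using assms unfolding linearization_def by auto

lemma linearization_constraint:
  assumes "linearization n M C" "c \<in> C"
  shows "c \<subseteq> M" "\<Union>c \<in> M"
  using assms unfolding linearization_def by simp_all

lemma linearization_singleton_in_monos: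
  assumes "linearization n M C" "i \<in> {1..n}"
  shows "{i} \<in> M"
  using assms unfolding linearization_def singletons_def by blast

lemma linearization_arc_in_monos:
  assumes "linearization n M C" "(a, b) \<in> arcs_D C"
  shows "a \<in> M" "b \<in> M"
  using assms unfolding linearization_def arcs_D_def by auto

lemma linearization_rtrancl_in_monos:
  assumes "linearization n M C" "(a, b) \<in> (arcs_D C)\<^sup>*" "a \<in> M"
  shows "b \<in> M"
  using assms(2,3) by induction (use linearization_arc_in_monos[OF assms(1)] in auto)

lemma linearization_finite_arcs_D:
  assumes "linearization n M C"
  shows "finite (arcs_D C)"
proof (rule finite_subset)
  show "arcs_D C \<subseteq> M \<times> M"
    using linearization_arc_in_monos[OF assms] by auto
  show "finite (M \<times> M)"
    using linearization_finite(1)[OF assms] by simp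
qed

lemma linearization_card_le_1:
  assumes "linearization n M C" "m \<in> M" "card m \<le> 1"
  obtains i where "i \<in> {1..n}" "m = {i}"
proof -
  have "m \<noteq> {}" "m \<subseteq> {1..n}"
    using linearization_monomial[OF assms(1,2)] by auto
  moreover have "finite m"
    using \<open>m \<subseteq> {1..n}\<close> finite_subset by auto
  ultimately have "card m = 1"
    using assms(3) card_0_eq[of m] by linarith
  then obtain i where "m = {i}"
    by (rule card_1_singletonE)
  then show thesis
    using that \<open>m \<subseteq> {1..n}\<close> by simp
qed

lemma linearization_proper_monos_iff:
  assumes "linearization n M C"
  shows "m \<in> proper_monos n M \<longleftrightarrow> m \<in> M \<and> \<not> card m \<le> 1"
  using linearization_card_le_1[OF assms, of m]
  unfolding proper_monos_def singletons_def by auto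

lemma simple_lin_linearization: "simple_lin n M C \<Longrightarrow> linearization n M C"
  unfolding simple_lin_def by simp

definition the_constraint :: "andc set \<Rightarrow> monomial \<Rightarrow> andc" where
  "the_constraint C m = (THE c. c \<in> C \<and> \<Union>c = m)"

lemma simple_lin_the_constraint:
  assumes "simple_lin n M C" "m \<in> proper_monos n M"
  shows "the_constraint C m \<in> C" "\<Union>(the_constraint C m) = m"
    and "\<And>m'. m' \<in> the_constraint C m \<Longrightarrow> m' \<in> M \<and> card m' < card m"
proof -
  have lin: "linearization n M C"
    using assms(1) by (rule simple_lin_linearization)
  have unique: "\<exists>!c. c \<in> C \<and> \<Union>c = m"
    using assms unfolding simple_lin_def by simp
  then show c: "the_constraint C m \<in> C" "\<Union>(the_constraint C m) = m"
    using theI'[OF unique] unfolding the_constraint_def by simp_all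
  have "\<forall>m\<in>proper_monos n M. \<exists>c\<in>C. \<Union>c = m \<and> (\<forall>m'\<in>c. card m' < card m)"
    using lin unfolding linearization_def by simp
  then obtain c' where c': "c' \<in> C" "\<Union>c' = m" "\<forall>m'\<in>c'. card m' < card m"
    using assms(2) by auto
  have "c' = the_constraint C m"
    unfolding the_constraint_def by (rule the1_equality[symmetric, OF unique]) (use c' in simp)
  moreover have "the_constraint C m \<subseteq> M"
    using linearization_constraint(1)[OF lin c(1)] .
  ultimately show "\<And>m'. m' \<in> the_constraint C m \<Longrightarrow> m' \<in> M \<and> card m' < card m"
    using c'(3) by auto
qed

text \<open>Here the counting condition |C| = |P| of simplicity is needed: it makes
  the_constraint a bijection from the proper monomials onto C.\<close>
lemma simple_lin_constraint_resultant:
  assumes "simple_lin n M C" "c \<in> C"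
  shows "\<Union>c \<in> proper_monos n M" "the_constraint C (\<Union>c) = c"
proof -
  let ?P = "proper_monos n M"
  have lin: "linearization n M C"
    using assms(1) by (rule simple_lin_linearization)
  have "inj_on (the_constraint C) ?P"
    by (metis assms(1) inj_onI simple_lin_the_constraint(2))
  then have "card (the_constraint C ` ?P) = card C"
    using assms(1) unfolding simple_lin_def by (simp add: card_image)
  moreover have "the_constraint C ` ?P \<subseteq> C"
    using simple_lin_the_constraint(1)[OF assms(1)] by blast
  ultimately have "the_constraint C ` ?P = C"
    using card_subset_eq linearization_finite(2)[OF lin] by blast
  then obtain m where "m \<in> ?P" "c = the_constraint C m"
    using assms(2) by auto
  then show "\<Union>c \<in> ?P" "the_constraint C (\<Union>c) = c"
    using simple_lin_the_constraint(2)[OF assms(1)] by auto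
qed

lemma simple_lin_monomial_induct [consumes 2, case_names singleton proper]:
  assumes "simple_lin n M C" "m \<in> M"
    and singleton: "\<And>i. i \<in> {1..n} \<Longrightarrow> P {i}"
    and proper: "\<And>m. m \<in> proper_monos n M \<Longrightarrow> (\<And>m'. m' \<in> the_constraint C m \<Longrightarrow> P m') \<Longrightarrow> P m"
  shows "P m"
  using assms(2)
proof (induction "card m" arbitrary: m rule: less_induct)
  case less
  have lin: "linearization n M C"
    using assms(1) by (rule simple_lin_linearization)
  show ?case
  proof (cases "card m \<le> 1")
    case True
    then show ?thesis
      using linearization_card_le_1[OF lin less.prems] singleton by metis
  next
    case False
    then have m: "m \<in> proper_monos n M"
      using linearization_proper_monos_iff[OF lin] less.prems by blast
    show ?thesis
    proof (rule proper[OF m])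
      fix m' assume "m' \<in> the_constraint C m"
      then show "P m'"
        using less.hyps simple_lin_the_constraint(3)[OF assms(1) m] by blast
    qed
  qed
qed

section \<open>Counting paths in D(L)\<close>

text \<open>For a simple linearization this is the number of directed paths from m to {j}
  in D(L); the condition card x < card m is only there for termination and is vacuous
  in that case.\<close>
function paths_to :: "andc set \<Rightarrow> nat \<Rightarrow> monomial \<Rightarrow> nat" where
  "paths_to C j m =
     (if card m \<le> 1 then (if m = {j} then 1 else 0)
      else (\<Sum>m'\<in>{x \<in> the_constraint C m. card x < card m}. paths_to C j m'))"
  by pat_completeness auto
termination by (relation "measure (\<lambda>(C, j, m). card m)") auto

declare paths_to.simps [simp del]

lemma paths_to_singleton: "paths_to C j {i} = (if i = j then 1 else 0)"
  by (subst paths_to.simps) simp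

lemma paths_to_proper:
  assumes "simple_lin n M C" "m \<in> proper_monos n M"
  shows "paths_to C j m = (\<Sum>m'\<in>the_constraint C m. paths_to C j m')"
proof -
  have "linearization n M C"
    using assms(1) by (rule simple_lin_linearization)
  then have "\<not> card m \<le> 1"
    using assms(2) linearization_proper_monos_iff by blast
  moreover have "{x \<in> the_constraint C m. card x < card m} = the_constraint C m"
    using simple_lin_the_constraint(3)[OF assms] by auto
  ultimately show ?thesis
    by (subst paths_to.simps) simp
qed

lemma paths_to_resultant:
  assumes "simple_lin n M C" "c \<in> C"
  shows "paths_to C j (\<Union>c) = (\<Sum>m\<in>c. paths_to C j m)"
  using paths_to_proper[OF assms(1) simple_lin_constraint_resultant(1)[OF assms]]
  by (simp add: simple_lin_constraint_resultant(2)[OF assms])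

lemma paths_to_pos:
  assumes "simple_lin n M C" "m \<in> M" "j \<in> m"
  shows "0 < paths_to C j m"
  using assms
proof (induction m rule: simple_lin_monomial_induct)
  case (singleton i)
  then show ?case by (simp add: paths_to_singleton)
next
  case (proper m)
  then obtain m' where m': "m' \<in> the_constraint C m" "j \<in> m'"
    using simple_lin_the_constraint(2)[OF assms(1)] by blast
  have "linearization n M C"
    using assms(1) by (rule simple_lin_linearization)
  then have "finite (the_constraint C m)"
    using linearization_constraint_finite simple_lin_the_constraint(1)[OF assms(1) proper.hyps]
    by blast
  moreover have "0 < paths_to C j m'"
    using proper.IH m' by blast
  ultimately show ?case
    using paths_to_proper[OF assms(1) proper.hyps] m'(1)
    by (simp add: sum_pos2)
qed

lemma arcs_DI: "c \<in> C \<Longrightarrow> m \<in> c \<Longrightarrow> (\<Union>c, m) \<in> arcs_D C"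
  unfolding arcs_D_def by blast

lemma simple_lin_arcs_D_iff:
  assumes "simple_lin n M C"
  shows "(u, a) \<in> arcs_D C \<longleftrightarrow> u \<in> proper_monos n M \<and> a \<in> the_constraint C u"
proof
  assume "(u, a) \<in> arcs_D C"
  then obtain c where "c \<in> C" "u = \<Union>c" "a \<in> c"
    unfolding arcs_D_def by blast
  then show "u \<in> proper_monos n M \<and> a \<in> the_constraint C u"
    using simple_lin_constraint_resultant[OF assms] by simp
next
  assume "u \<in> proper_monos n M \<and> a \<in> the_constraint C u"
  then show "(u, a) \<in> arcs_D C"
    using arcs_DI[OF simple_lin_the_constraint(1)[OF assms]] simple_lin_the_constraint(2)[OF assms]
    by metis
qed

lemma paths_to_add_le:
  assumes "simple_lin n M C" "(u, a) \<in> arcs_D C" "(u, b) \<in> arcs_D C" "a \<noteq> b"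
  shows "paths_to C j a + paths_to C j b \<le> paths_to C j u"
proof -
  have u: "u \<in> proper_monos n M" and ab: "{a, b} \<subseteq> the_constraint C u"
    using assms(2,3) simple_lin_arcs_D_iff[OF assms(1)] by auto
  have "paths_to C j a + paths_to C j b = (\<Sum>m\<in>{a, b}. paths_to C j m)"
    using assms(4) by simp
  also have "\<dots> \<le> (\<Sum>m\<in>the_constraint C u. paths_to C j m)"
    using ab linearization_constraint_finite[OF simple_lin_linearization[OF assms(1)]
        simple_lin_the_constraint(1)[OF assms(1) u]]
    by (intro sum_mono2) auto
  finally show ?thesis
    using paths_to_proper[OF assms(1) u] by simp
qed

lemma paths_to_arc_mono:
  assumes "simple_lin n M C" "(a, b) \<in> arcs_D C"
  shows "paths_to C j b \<le> paths_to C j a"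
proof -
  obtain c where c: "c \<in> C" "a = \<Union>c" "b \<in> c"
    using assms(2) unfolding arcs_D_def by blast
  have "finite c"
    using linearization_constraint_finite[OF simple_lin_linearization[OF assms(1)] c(1)] .
  then show ?thesis
    using paths_to_resultant[OF assms(1) c(1)] c(2,3) member_le_sum[of b c "paths_to C j"] by simp
qed

lemma paths_to_rtrancl_mono:
  assumes "simple_lin n M C" "(a, b) \<in> (arcs_D C)\<^sup>*"
  shows "paths_to C j b \<le> paths_to C j a"
  using assms(2)
proof induction
  case (step b b')
  then show ?case
    using paths_to_arc_mono[OF assms(1) step(2), of j] by linarith
qed simp

section \<open>Points of P(L) given by path counts\<close>

lemma min_1_sum_le_sum_min_1:
  fixes x :: "'a \<Rightarrow> 'b :: linordered_idom"
  assumes "finite A" "\<And>i. i \<in> A \<Longrightarrow> 0 \<le> x i"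
  shows "min 1 (\<Sum>i\<in>A. x i) \<le> (\<Sum>i\<in>A. min 1 (x i))"
  using assms
proof (induction A rule: finite_induct)
  case (insert a A)
  have "0 \<le> x a" "0 \<le> (\<Sum>i\<in>A. x i)"
    using insert.prems by (auto intro: sum_nonneg)
  then have "min 1 (x a + (\<Sum>i\<in>A. x i)) \<le> min 1 (x a) + min 1 (\<Sum>i\<in>A. x i)"
    by (auto simp: min_def)
  also have "\<dots> \<le> min 1 (x a) + (\<Sum>i\<in>A. min 1 (x i))"
    using insert by simp
  finally show ?case
    using insert.hyps by simp
qed simp

lemma polytope_L_bounds:
  assumes "y \<in> polytope_L n M C" "m \<in> M"
  shows "0 \<le> y m" "y m \<le> 1"
  using assms unfolding polytope_L_def by auto

lemma polytope_L_constraint_sum: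
  assumes "y \<in> polytope_L n M C" "c \<in> C"
  shows "(\<Sum>m\<in>c. y m) \<le> y (\<Union>c) + real (card c) - 1"
  using assms unfolding polytope_L_def by auto

definition path_point :: "monomial set \<Rightarrow> andc set \<Rightarrow> nat \<Rightarrow> real \<Rightarrow> monomial \<Rightarrow> real" where
  "path_point M C j e m = (if m \<in> M then 1 - min 1 (e * real (paths_to C j m)) else 0)"

lemma path_point_singleton:
  assumes "{i} \<in> M" "0 \<le> e" "e \<le> 1"
  shows "path_point M C j e {i} = (if i = j then 1 - e else 1)"
  using assms by (simp add: path_point_def paths_to_singleton)

lemma path_point_in_polytope:
  assumes "simple_lin n M C" "0 \<le> e"
  shows "path_point M C j e \<in> polytope_L n M C"
proof -
  have lin: "linearization n M C"
    using assms(1) by (rule simple_lin_linearization)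
  let ?x = "\<lambda>m. e * real (paths_to C j m)"
  note members = linearization_constraint(1)[OF lin]
    and resultant = linearization_constraint(2)[OF lin]
  have "path_point M C j e (\<Union>c) \<le> path_point M C j e m" if "c \<in> C" "m \<in> c" for c m
  proof -
    have "(\<Union>c, m) \<in> arcs_D C"
      using that by (rule arcs_DI)
    then have "?x m \<le> ?x (\<Union>c)"
      using paths_to_arc_mono[OF assms(1)] assms(2) by (simp add: mult_left_mono)
    then show ?thesis
      using resultant members that unfolding path_point_def by auto
  qed
  moreover have "(\<Sum>m\<in>c. path_point M C j e m) \<le> path_point M C j e (\<Union>c) + real (card c) - 1"
    if c: "c \<in> C" for c
  proof -
    have "(\<Sum>m\<in>c. path_point M C j e m) = (\<Sum>m\<in>c. 1 - min 1 (?x m))"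
      using members[OF c] unfolding path_point_def by (intro sum.cong) auto
    also have "\<dots> = real (card c) - (\<Sum>m\<in>c. min 1 (?x m))"
      by (simp add: sum_subtractf)
    also have "\<dots> \<le> real (card c) - min 1 (?x (\<Union>c))"
      using min_1_sum_le_sum_min_1[OF linearization_constraint_finite[OF lin c], of ?x] assms(2)
      by (simp add: paths_to_resultant[OF assms(1) c] sum_distrib_left)
    finally show ?thesis
      using resultant[OF c] unfolding path_point_def by simp
  qed
  ultimately show ?thesis
    using assms(2) unfolding polytope_L_def path_point_def by auto
qed

text \<open>The defining inequalities make 1 - y subadditive along D(L), so a deficit
  1 - y{j} at the only non-saturated singleton propagates at most once along each path.\<close>
lemma polytope_ge_path_point:
  assumes "simple_lin n M C" "y \<in> polytope_L n M C" "j \<in> {1..n}"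
    and saturated: "\<And>i. i \<in> {1..n} \<Longrightarrow> i \<noteq> j \<Longrightarrow> y {i} = 1"
    and "m \<in> M"
  shows "path_point M C j (1 - y {j}) m \<le> y m"
  using assms(1,5)
proof (induction m rule: simple_lin_monomial_induct)
  case (singleton i)
  have "{j} \<in> M"
    using linearization_singleton_in_monos[OF simple_lin_linearization[OF assms(1)] assms(3)] .
  then have "0 \<le> y {j}" "y {j} \<le> 1"
    using polytope_L_bounds[OF assms(2)] by auto
  then show ?case
    using singleton saturated \<open>{j} \<in> M\<close>
    by (auto simp: path_point_def paths_to_singleton)
next
  case (proper m)
  let ?e = "1 - y {j}" and ?c = "the_constraint C m"
  let ?x = "\<lambda>m. ?e * real (paths_to C j m)"
  have lin: "linearization n M C"
    using assms(1) by (rule simple_lin_linearization)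
  have c: "?c \<in> C" "\<Union>?c = m" "?c \<subseteq> M"
    using simple_lin_the_constraint[OF assms(1) proper.hyps] by auto
  have "m \<in> M"
    using proper.hyps unfolding proper_monos_def by simp
  then have bounds: "0 \<le> y m" "0 \<le> ?e"
    using polytope_L_bounds[OF assms(2)] linearization_singleton_in_monos[OF lin assms(3)]
    by auto
  have "real (card ?c) - (\<Sum>m'\<in>?c. min 1 (?x m')) = (\<Sum>m'\<in>?c. 1 - min 1 (?x m'))"
    by (simp add: sum_subtractf)
  also have "\<dots> = (\<Sum>m'\<in>?c. path_point M C j ?e m')"
    using c(3) unfolding path_point_def by (intro sum.cong) auto
  also have "\<dots> \<le> (\<Sum>m'\<in>?c. y m')"
    using proper.IH by (rule sum_mono)
  also have "\<dots> \<le> y m + real (card ?c) - 1"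
    using polytope_L_constraint_sum[OF assms(2) c(1)] c(2) by simp
  finally have "1 - (\<Sum>m'\<in>?c. min 1 (?x m')) \<le> y m"
    by simp
  moreover have "(\<Sum>m'\<in>?c. min 1 (?x m')) \<le> ?x m"
    using paths_to_proper[OF assms(1) proper.hyps, of j]
    by (simp add: sum_distrib_left sum_mono)
  ultimately show ?case
    using bounds \<open>m \<in> M\<close> unfolding path_point_def by simp
qed

section \<open>Cycles with a single source\<close>

lemma rtrancl_consecutive:
  assumes "i \<le> j" "\<And>d. i \<le> d \<Longrightarrow> d < j \<Longrightarrow> (x d, x (Suc d)) \<in> R"
  shows "(x i, x j) \<in> R\<^sup>*"
  using assms(1)
proof (induction j rule: dec_induct)
  case (step d)
  then show ?case
    using assms(2) by (meson rtrancl_into_rtrancl)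
qed simp

text \<open>Walking around a cycle x 0, ..., x k from its only source x 0 (which has out-arcs
  to both neighbours), arcs point forward until the first backward arc at some q; from
  there on they must keep pointing backward, since a forward arc would create a second
  source. Hence x q is a common descendant of x 1 and x (k - 1).\<close>
lemma unique_source_walk_reconverges:
  fixes x :: "nat \<Rightarrow> 'a"
  assumes "0 < k"
    and orient: "\<And>d. d < k \<Longrightarrow> (x d, x (Suc d)) \<in> Z \<or> (x (Suc d), x d) \<in> Z"
    and first: "(x 0, x 1) \<in> Z" "(x 1, x 0) \<notin> Z"
    and last: "(x k, x (k - 1)) \<in> Z"
    and no_source: "\<And>d. 0 < d \<Longrightarrow> d < k \<Longrightarrow> (x d, x (d - 1)) \<in> Z \<Longrightarrow> (x d, x (Suc d)) \<notin> Z"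
  obtains w where "(x 1, w) \<in> Z\<^sup>*" "(x (k - 1), w) \<in> Z\<^sup>*"
proof -
  define q where "q = (LEAST d. (x (Suc d), x d) \<in> Z)"
  have "(x (Suc (k - 1)), x (k - 1)) \<in> Z"
    using last \<open>0 < k\<close> by simp
  then have back_q: "(x (Suc q), x q) \<in> Z" and "q \<le> k - 1"
    unfolding q_def by (rule LeastI, rule Least_le)
  have "q \<noteq> 0"
    using back_q first(2) by (metis One_nat_def)
  have "(x 1, x q) \<in> Z\<^sup>*"
  proof (rule rtrancl_consecutive)
    fix d assume "1 \<le> d" "d < q"
    then show "(x d, x (Suc d)) \<in> Z"
      using orient[of d] not_less_Least[of d "\<lambda>d. (x (Suc d), x d) \<in> Z"] \<open>q \<le> k - 1\<close>
      unfolding q_def by auto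
  qed (use \<open>q \<noteq> 0\<close> in simp)
  moreover have backward: "d < k \<longrightarrow> (x (Suc d), x d) \<in> Z" if "q \<le> d" for d
    using that
  proof (induction d rule: dec_induct)
    case base
    then show ?case using back_q by simp
  next
    case (step d)
    show ?case
    proof
      assume "Suc d < k"
      then have "(x (Suc d), x (Suc (Suc d))) \<notin> Z"
        using step.IH no_source[of "Suc d"] by simp
      then show "(x (Suc (Suc d)), x (Suc d)) \<in> Z"
        using orient[OF \<open>Suc d < k\<close>] by simp
    qed
  qed
  have "(x q, x (k - 1)) \<in> (Z\<inverse>)\<^sup>*"
    by (rule rtrancl_consecutive) (use \<open>q \<le> k - 1\<close> backward in auto)
  then have "(x (k - 1), x q) \<in> Z\<^sup>*"
    by (rule rtrancl_converseD)
  ultimately show thesis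
    by (rule that)
qed

lemma undirected_cycle_subgraph_edge:
  assumes "undirected_cycle_subgraph C Z vs" "(a, b) \<in> Z"
  obtains i where "i < length vs" "{a, b} = {vs ! i, vs ! ((i + 1) mod length vs)}"
proof -
  have "{a, b} \<in> {{a, b} | a b. (a, b) \<in> Z}"
    using assms(2) by blast
  then show thesis
    using assms(1) that unfolding undirected_cycle_subgraph_def by auto
qed

lemma undirected_cycle_subgraph_nodes:
  assumes "undirected_cycle_subgraph C Z vs"
  shows "nodes_of Z \<subseteq> set vs"
proof
  fix v assume "v \<in> nodes_of Z"
  then obtain a b where ab: "(a, b) \<in> Z" "v = a \<or> v = b"
    unfolding nodes_of_def by force
  obtain i where "i < length vs" "{a, b} = {vs ! i, vs ! ((i + 1) mod length vs)}"
    using undirected_cycle_subgraph_edge[OF assms ab(1)] .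
  moreover have "(i + 1) mod length vs < length vs"
    by (rule mod_less_divisor) (use \<open>i < length vs\<close> in linarith)
  ultimately show "v \<in> set vs"
    using ab(2) by (auto simp: doubleton_eq_iff)
qed

lemma bij_betw_add_mod:
  fixes r k :: nat
  assumes "0 < k"
  shows "bij_betw (\<lambda>d. (r + d) mod k) {..<k} {..<k}"
proof (rule bij_betw_byWitness[where f' = "\<lambda>i. (i + (k - r mod k)) mod k"])
  have shift: "(r + (d + (k - r mod k))) mod k = d" if "d < k" for d
  proof -
    have "(r + (d + (k - r mod k))) mod k = (r mod k + (d + (k - r mod k))) mod k"
      by (rule mod_add_left_eq[symmetric])
    also have "\<dots> = (d + k) mod k"
      using mod_less_divisor[OF assms, of r] by (simp add: algebra_simps)
    finally show ?thesis
      using that by simp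
  qed
  show "\<forall>d\<in>{..<k}. ((r + d) mod k + (k - r mod k)) mod k = d"
  proof
    fix d assume "d \<in> {..<k}"
    have "((r + d) mod k + (k - r mod k)) mod k = (r + (d + (k - r mod k))) mod k"
      unfolding mod_add_left_eq by (simp only: add.assoc)
    then show "((r + d) mod k + (k - r mod k)) mod k = d"
      using shift \<open>d \<in> {..<k}\<close> by simp
  qed
  show "\<forall>i\<in>{..<k}. (r + (i + (k - r mod k)) mod k) mod k = i"
    using shift by (simp add: mod_add_right_eq)
qed (use assms in auto)

lemma undirected_cycle_subgraph_walk:
  assumes "undirected_cycle_subgraph C Z vs" "u \<in> set vs"
  obtains k x where "3 \<le> k" "x 0 = u" "x k = u" "inj_on x {..<k}"
    and "\<And>d. d < k \<Longrightarrow> (x d, x (Suc d)) \<in> Z \<or> (x (Suc d), x d) \<in> Z"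
    and "\<And>d. d < k \<Longrightarrow> \<not> ((x d, x (Suc d)) \<in> Z \<and> (x (Suc d), x d) \<in> Z)"
    and "\<And>a b. (a, b) \<in> Z \<Longrightarrow> \<exists>d<k. {a, b} = {x d, x (Suc d)}"
proof -
  define k where "k = length vs"
  have distinct: "distinct vs" and "3 \<le> k"
    and edges: "{{a, b} | a b. (a, b) \<in> Z} = {{vs ! i, vs ! ((i + 1) mod k)} | i. i < k}"
    and single: "\<And>i. i < k \<Longrightarrow>
      \<not> ((vs ! i, vs ! ((i + 1) mod k)) \<in> Z \<and> (vs ! ((i + 1) mod k), vs ! i) \<in> Z)"
    using assms(1) unfolding undirected_cycle_subgraph_def k_def by auto
  obtain r where "r < k" "vs ! r = u"
    using assms(2) unfolding k_def by (auto simp: in_set_conv_nth)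
  define idx where "idx d = (r + d) mod k" for d
  define x where "x d = vs ! idx d" for d
  have idx_bij: "bij_betw idx {..<k} {..<k}"
    unfolding idx_def using \<open>3 \<le> k\<close> by (intro bij_betw_add_mod) simp
  have idx_less: "idx d < k" for d
    unfolding idx_def using \<open>3 \<le> k\<close> by simp
  have cycle_edge: "{vs ! idx d, vs ! ((idx d + 1) mod k)} = {x d, x (Suc d)}" for d
    unfolding x_def idx_def by (simp add: mod_Suc_eq)
  show thesis
  proof
    show "3 \<le> k" by fact
    show "x 0 = u" "x k = u"
      unfolding x_def idx_def using \<open>r < k\<close> \<open>vs ! r = u\<close> by simp_all
    have "inj_on ((!) vs) {..<k}"
      using distinct unfolding k_def by (simp add: inj_on_nth)
    then show "inj_on x {..<k}"
      using comp_inj_on[OF bij_betw_imp_inj_on[OF idx_bij]] bij_betw_imp_surj_on[OF idx_bij]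
      unfolding x_def by (simp add: comp_def)
    fix d assume "d < k"
    have "{x d, x (Suc d)} \<in> {{a, b} | a b. (a, b) \<in> Z}"
      unfolding edges cycle_edge[symmetric] using idx_less by blast
    then show "(x d, x (Suc d)) \<in> Z \<or> (x (Suc d), x d) \<in> Z"
      by (auto simp: doubleton_eq_iff)
    show "\<not> ((x d, x (Suc d)) \<in> Z \<and> (x (Suc d), x d) \<in> Z)"
      using single[OF idx_less] cycle_edge unfolding x_def idx_def by (simp add: mod_Suc_eq)
  next
    fix a b assume "(a, b) \<in> Z"
    then obtain i where "i < k" "{a, b} = {vs ! i, vs ! ((i + 1) mod k)}"
      using undirected_cycle_subgraph_edge[OF assms(1)] unfolding k_def by blast
    moreover obtain d where "d < k" "idx d = i"
      using bij_betw_imp_surj_on[OF idx_bij] \<open>i < k\<close> by (metis imageE lessThan_iff)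
    ultimately show "\<exists>d<k. {a, b} = {x d, x (Suc d)}"
      using cycle_edge by metis
  qed
qed

lemma U_nodesI:
  assumes "finite Z" "(v, a) \<in> Z" "(v, b) \<in> Z" "a \<noteq> b"
  shows "v \<in> U_nodes Z"
proof -
  have "{w. (v, w) \<in> Z} \<subseteq> snd ` Z"
    by force
  then have "finite {w. (v, w) \<in> Z}"
    using assms(1) finite_surj by blast
  moreover have "{a, b} \<subseteq> {w. (v, w) \<in> Z}"
    using assms(2,3) by blast
  ultimately have "card {a, b} \<le> card {w. (v, w) \<in> Z}"
    by (rule card_mono)
  then have "2 \<le> card {w. (v, w) \<in> Z}"
    using assms(4) by simp
  moreover have "v \<in> nodes_of Z"
    using assms(2) unfolding nodes_of_def by force
  ultimately show ?thesis
    unfolding U_nodes_def by simp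
qed

lemma two_le_card_subset_doubleton:
  assumes "2 \<le> card A" "A \<subseteq> {a, b}"
  shows "a \<in> A" "b \<in> A"
proof -
  have "\<not> A \<subseteq> {c}" for c
    using card_mono[of "{c}" A] assms(1) by auto
  then show "a \<in> A" "b \<in> A"
    using assms(2) by blast+
qed

lemma cycle_walk_neighbours:
  assumes "(u, b) \<in> Z" "x 0 = u" "x k = u" "inj_on x {..<k}"
    and arc_edge: "\<And>a b. (a, b) \<in> Z \<Longrightarrow> \<exists>d<k. {a, b} = {x d, x (Suc d)}"
  shows "b = x 1 \<or> b = x (k - 1)"
proof -
  have x_eq_u: "x d = u \<longleftrightarrow> d = 0" if "d < k" for d
    using inj_on_eq_iff[OF assms(4), of d 0] that assms(2) by auto
  obtain d where "d < k" "{u, b} = {x d, x (Suc d)}"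
    using arc_edge[OF assms(1)] by blast
  then consider "u = x d" "b = x (Suc d)" | "u = x (Suc d)" "b = x d"
    by (auto simp: doubleton_eq_iff)
  then show ?thesis
  proof cases
    case 1
    then have "d = 0"
      using x_eq_u[OF \<open>d < k\<close>] by simp
    then show ?thesis
      using 1 by simp
  next
    case 2
    then have "Suc d = k"
      using x_eq_u[of "Suc d"] \<open>d < k\<close> by (cases "Suc d < k") auto
    then have "d = k - 1"
      by simp
    then show ?thesis
      using 2(2) by simp
  qed
qed

lemma unique_source_cycle_reconverges:
  assumes "undirected_cycle_subgraph C Z vs" "finite Z" "card (U_nodes Z) = 1"
  obtains u a b w where "u \<in> set vs" "(u, a) \<in> Z" "(u, b) \<in> Z" "a \<noteq> b"
    and "(a, w) \<in> Z\<^sup>*" "(b, w) \<in> Z\<^sup>*"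
proof -
  obtain u where U: "U_nodes Z = {u}"
    using assms(3) card_1_singletonE by blast
  then have "u \<in> set vs"
    using undirected_cycle_subgraph_nodes[OF assms(1)] unfolding U_nodes_def by blast
  obtain k x where k: "3 \<le> k" and x: "x 0 = u" "x k = u" and inj: "inj_on x {..<k}"
    and orient: "\<And>d. d < k \<Longrightarrow> (x d, x (Suc d)) \<in> Z \<or> (x (Suc d), x d) \<in> Z"
    and single: "\<And>d. d < k \<Longrightarrow> \<not> ((x d, x (Suc d)) \<in> Z \<and> (x (Suc d), x d) \<in> Z)"
    and arc_edge: "\<And>a b. (a, b) \<in> Z \<Longrightarrow> \<exists>d<k. {a, b} = {x d, x (Suc d)}"
    by (rule undirected_cycle_subgraph_walk[OF assms(1) \<open>u \<in> set vs\<close>]) blast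
  have "2 \<le> card {w. (u, w) \<in> Z}"
    using U unfolding U_nodes_def by auto
  moreover have "{w. (u, w) \<in> Z} \<subseteq> {x 1, x (k - 1)}"
  proof
    fix b assume "b \<in> {w. (u, w) \<in> Z}"
    then have "(u, b) \<in> Z"
      by simp
    then show "b \<in> {x 1, x (k - 1)}"
      using cycle_walk_neighbours[OF _ x inj arc_edge] by blast
  qed
  ultimately have "x 1 \<in> {w. (u, w) \<in> Z}" "x (k - 1) \<in> {w. (u, w) \<in> Z}"
    by (rule two_le_card_subset_doubleton)+
  then have arcs_u: "(u, x 1) \<in> Z" "(u, x (k - 1)) \<in> Z"
    by simp_all
  have "x 1 \<noteq> x (k - 1)"
    using inj_on_eq_iff[OF inj, of 1 "k - 1"] k by simp
  moreover obtain w where "(x 1, w) \<in> Z\<^sup>*" "(x (k - 1), w) \<in> Z\<^sup>*"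
  proof (rule unique_source_walk_reconverges[of k x Z])
    show "(x 0, x 1) \<in> Z" "(x k, x (k - 1)) \<in> Z"
      using arcs_u x by simp_all
    then show "(x 1, x 0) \<notin> Z"
      using single[of 0] k by simp
    fix d assume d: "0 < d" "d < k" "(x d, x (d - 1)) \<in> Z"
    have "x d \<noteq> u"
      using inj_on_eq_iff[OF inj, of d 0] d x by simp
    moreover have "x (d - 1) \<noteq> x (Suc d)"
    proof (cases "Suc d = k")
      case True
      then show ?thesis
        using inj_on_eq_iff[OF inj, of "d - 1" 0] d k x by simp
    next
      case False
      then show ?thesis
        using inj_on_eq_iff[OF inj, of "d - 1" "Suc d"] d by simp
    qed
    ultimately show "(x d, x (Suc d)) \<notin> Z"
      using U_nodesI[OF assms(2) d(3)] U by auto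
  qed (use k orient in simp_all)
  ultimately show thesis
    using that \<open>u \<in> set vs\<close> arcs_u by blast
qed

lemma cycle_below_succ_has_two_paths:
  assumes "simple_lin n M C" "undirected_cycle_subgraph C Z vs"
    and "set vs \<subseteq> succ_D C T" "card (U_nodes Z) = 1"
  obtains j t where "j \<in> {1..n}" "t \<in> T" "2 \<le> paths_to C j t"
proof -
  have lin: "linearization n M C"
    using assms(1) by (rule simple_lin_linearization)
  have Z: "Z \<subseteq> arcs_D C"
    using assms(2) unfolding undirected_cycle_subgraph_def by simp
  then have "finite Z"
    using linearization_finite_arcs_D[OF lin] finite_subset by blast
  obtain u a b w where "u \<in> set vs" "(u, a) \<in> Z" "(u, b) \<in> Z" "a \<noteq> b"
    and "(a, w) \<in> Z\<^sup>*" "(b, w) \<in> Z\<^sup>*"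
    by (rule unique_source_cycle_reconverges[OF assms(2) \<open>finite Z\<close> assms(4)]) blast
  then have arcs: "(u, a) \<in> arcs_D C" "(u, b) \<in> arcs_D C"
    and paths: "(a, w) \<in> (arcs_D C)\<^sup>*" "(b, w) \<in> (arcs_D C)\<^sup>*"
    using Z rtrancl_mono by blast+
  have "w \<in> M"
    using linearization_rtrancl_in_monos[OF lin paths(1)]
      linearization_arc_in_monos(2)[OF lin arcs(1)] .
  then obtain j where "j \<in> w" "j \<in> {1..n}"
    using linearization_monomial[OF lin] by blast
  have "0 < paths_to C j w"
    using paths_to_pos[OF assms(1) \<open>w \<in> M\<close> \<open>j \<in> w\<close>] .
  then have "2 \<le> paths_to C j u"
    using paths_to_add_le[OF assms(1) arcs \<open>a \<noteq> b\<close>, of j]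
      paths_to_rtrancl_mono[OF assms(1) paths(1), of j]
      paths_to_rtrancl_mono[OF assms(1) paths(2), of j]
    by linarith
  moreover obtain t where "t \<in> T" "(t, u) \<in> (arcs_D C)\<^sup>*"
    using assms(3) \<open>u \<in> set vs\<close> unfolding succ_D_def by blast
  ultimately show thesis
    using that \<open>j \<in> {1..n}\<close> paths_to_rtrancl_mono[OF assms(1), of t u j] by fastforce
qed

section \<open>A fractional vertex of the projection\<close>

lemma convex_combination_eq_lower_bound:
  fixes p q v t :: real
  assumes "0 < t" "t < 1" "v \<le> p" "v \<le> q" "v = (1 - t) * p + t * q"
  shows "p = v" "q = v"
proof -
  have "0 \<le> (1 - t) * (p - v)" "0 \<le> t * (q - v)"
    using assms by simp_all
  moreover have "(1 - t) * (p - v) + t * (q - v) = 0"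
    using assms(5) by (simp add: algebra_simps)
  ultimately have "(1 - t) * (p - v) = 0" "t * (q - v) = 0"
    by linarith+
  then show "p = v" "q = v"
    using assms(1,2) by simp_all
qed

lemma convex_combination_eq_upper_bound:
  fixes p q v t :: real
  assumes "0 < t" "t < 1" "p \<le> v" "q \<le> v" "v = (1 - t) * p + t * q"
  shows "p = v" "q = v"
  using convex_combination_eq_lower_bound[of t "-v" "-p" "-q"] assms
  by (simp_all add: algebra_simps)

lemma polytope_deficit_ge_of_zero:
  assumes "simple_lin n M C" "y \<in> polytope_L n M C" "j \<in> {1..n}"
    and "\<And>i. i \<in> {1..n} \<Longrightarrow> i \<noteq> j \<Longrightarrow> y {i} = 1"
    and "t \<in> M" "y t = 0" "0 < paths_to C j t"
  shows "1 / real (paths_to C j t) \<le> 1 - y {j}"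
proof -
  have "1 \<le> (1 - y {j}) * real (paths_to C j t)"
    using polytope_ge_path_point[OF assms(1-5)] assms(5,6) unfolding path_point_def by simp
  then show ?thesis
    using assms(7) by (simp add: field_simps)
qed

lemma vertex_of_proj_onI:
  assumes "v \<in> proj_on M' ` K"
    and "\<And>ya yb \<tau>. ya \<in> K \<Longrightarrow> yb \<in> K \<Longrightarrow> 0 < \<tau> \<Longrightarrow> \<tau> < 1 \<Longrightarrow>
           (\<And>m. m \<in> M' \<Longrightarrow> v m = (1 - \<tau>) * ya m + \<tau> * yb m) \<Longrightarrow>
           \<forall>m\<in>M'. ya m = yb m"
  shows "vertex_of v (proj_on M' ` K)"
  unfolding vertex_of_def
proof (intro conjI notI)
  assume "\<exists>a\<in>proj_on M' ` K. \<exists>b\<in>proj_on M' ` K.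
    \<exists>\<tau>. 0 < \<tau> \<and> \<tau> < 1 \<and> a \<noteq> b \<and> v = (\<lambda>m. (1 - \<tau>) * a m + \<tau> * b m)"
  then obtain ya yb \<tau> where "ya \<in> K" "yb \<in> K" "0 < \<tau>" "\<tau> < 1"
    and neq: "proj_on M' ya \<noteq> proj_on M' yb"
    and comb: "v = (\<lambda>m. (1 - \<tau>) * proj_on M' ya m + \<tau> * proj_on M' yb m)"
    by blast
  moreover have "v m = (1 - \<tau>) * ya m + \<tau> * yb m" if "m \<in> M'" for m
    using fun_cong[OF comb, of m] that unfolding proj_on_def by simp
  ultimately have "\<forall>m\<in>M'. ya m = yb m"
    using assms(2) by blast
  then show False
    using neq unfolding proj_on_def by auto
qed (rule assms(1))

lemma vertex_path_point:
  assumes "simple_lin n M C" "singletons n \<subseteq> M'" "M' \<subseteq> M" "j \<in> {1..n}"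
    and "t \<in> M'" "0 < paths_to C j t"
  defines "v \<equiv> proj_on M' (path_point M C j (1 / real (paths_to C j t)))"
  shows "vertex_of v (proj_on M' ` polytope_L n M C)"
proof (rule vertex_of_proj_onI)
  define e where "e = 1 / real (paths_to C j t)"
  have e: "0 < e" "e \<le> 1" "e * real (paths_to C j t) = 1"
    using assms(6) unfolding e_def by simp_all
  have singleton: "{i} \<in> M'" if "i \<in> {1..n}" for i
    using assms(2) that unfolding singletons_def by blast
  have v: "v m = path_point M C j e m" if "m \<in> M'" for m
    using that unfolding v_def e_def proj_on_def by simp
  have v_singleton: "v {i} = (if i = j then 1 - e else 1)" if "i \<in> {1..n}" for i
    using v[OF singleton[OF that]] path_point_singleton[of i M e C j] assms(3) singleton[OF that] e
    by auto
  have v_t: "v t = 0"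
    using v[OF assms(5)] assms(3,5) e unfolding path_point_def by simp
  show "v \<in> proj_on M' ` polytope_L n M C"
    unfolding v_def using path_point_in_polytope[OF assms(1)] e(1) e_def by simp
  fix ya yb \<tau> assume y: "ya \<in> polytope_L n M C" "yb \<in> polytope_L n M C"
    and \<tau>: "0 < \<tau>" "\<tau> < 1" and split: "\<And>m. m \<in> M' \<Longrightarrow> v m = (1 - \<tau>) * ya m + \<tau> * yb m"
  have bounds: "0 \<le> y m" "y m \<le> 1" if "y \<in> {ya, yb}" "m \<in> M'" for y m
    using polytope_L_bounds y that assms(3) by blast+
  have other: "ya {i} = 1" "yb {i} = 1" if "i \<in> {1..n}" "i \<noteq> j" for i
    using convex_combination_eq_upper_bound[OF \<tau>, of "ya {i}" "v {i}" "yb {i}"]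
      bounds[of _ "{i}"] split[of "{i}"] singleton[OF that(1)] v_singleton[OF that(1)] that(2)
    by simp_all
  have "ya t = 0" "yb t = 0"
    using convex_combination_eq_lower_bound[OF \<tau>, of "v t" "ya t" "yb t"]
      bounds[of _ t] split[of t] assms(5) v_t by simp_all
  then have "ya {j} \<le> 1 - e" "yb {j} \<le> 1 - e"
    using polytope_deficit_ge_of_zero[OF assms(1) y(1) assms(4) other(1) _ _ assms(6)]
      polytope_deficit_ge_of_zero[OF assms(1) y(2) assms(4) other(2) _ _ assms(6)]
      assms(3,5) unfolding e_def by auto
  then have j: "ya {j} = 1 - e" "yb {j} = 1 - e"
    using convex_combination_eq_upper_bound[OF \<tau>, of "ya {j}" "v {j}" "yb {j}"]
      split[of "{j}"] singleton[OF assms(4)] v_singleton[OF assms(4)] by simp_all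
  show "\<forall>m\<in>M'. ya m = yb m"
  proof
    fix m assume "m \<in> M'"
    then have "v m \<le> ya m" "v m \<le> yb m"
      using polytope_ge_path_point[OF assms(1) y(1) assms(4) other(1)]
        polytope_ge_path_point[OF assms(1) y(2) assms(4) other(2)] j v assms(3)
      by auto
    then show "ya m = yb m"
      using convex_combination_eq_lower_bound[OF \<tau>, of "v m" "ya m" "yb m"] split[OF \<open>m \<in> M'\<close>]
      by simp
  qed
qed

theorem lemma3p13:
  fixes n :: nat and M :: "nat set set" and C :: "nat set set set"
    and T :: "nat set set" and Z :: "(nat set \<times> nat set) set" and vs :: "nat set list"
  assumes "simple_lin n M C"
    and "T \<subseteq> proper_monos n M"
    and "undirected_cycle_subgraph C Z vs"
    and "set vs \<subseteq> succ_D C T"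
    and "card (U_nodes Z) = 1"
  shows "\<not> integral_polytope (proj_on (singletons n \<union> T) ` polytope_L n M C)"
proof -
  obtain j t where j: "j \<in> {1..n}" and t: "t \<in> T" and two: "2 \<le> paths_to C j t"
    using cycle_below_succ_has_two_paths[OF assms(1,3,4,5)] by blast
  define N where "N = real (paths_to C j t)"
  define v where "v = proj_on (singletons n \<union> T) (path_point M C j (1 / N))"
  have "singletons n \<union> T \<subseteq> M"
    using assms(2) linearization_singleton_in_monos[OF simple_lin_linearization[OF assms(1)]]
    unfolding proper_monos_def singletons_def by blast
  then have "vertex_of v (proj_on (singletons n \<union> T) ` polytope_L n M C)"
    unfolding v_def N_def using vertex_path_point[OF assms(1) _ _ j] t two by simp
  moreover have "{j} \<in> singletons n" "{j} \<in> M"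
    using j \<open>singletons n \<union> T \<subseteq> M\<close> unfolding singletons_def by auto
  then have "v {j} = 1 - 1 / N"
    unfolding v_def proj_on_def using path_point_singleton two N_def by simp
  then have "v {j} \<notin> \<int>"
    using two Ints_nonzero_abs_less1[of "v {j}"] unfolding N_def by auto
  ultimately show ?thesis
    unfolding integral_polytope_def by blast
qed

end
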